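(* Let $(D_n)_{n\in\mathbb Z}$ be the integer sequence with $D_0=1$, $D_1=D_2=0$ and $D_n+D_{n+1}=D_{n+3}$ for all $n\in\mathbb Z$ (so $D_{-1}=-1$). For integers $n,i,j$ let $$\Delta'_{n,n+i,n+i+j}=\det\begin{pmatrix}D_{n+2} & D_{n+4} & D_{n+3}\\ D_{n+i+2} & D_{n+i+4} & D_{n+i+3}\\ D_{n+i+j+2} & D_{n+i+j+4} & D_{n+i+j+3}\end{pmatrix}.$$ Then $\Delta'_{n,n+i,n+i+j}$ does not depend on $n$, and for all $n,i,j\in\mathbb Z$, $$\Delta'_{n,n+i,n+i+j}=D_{i+2}D_{i+j+4}-D_{i+j+2}D_{i+4}.$$ *)

theory Defs
  imports "HOL-Analysis.Analysis"
begin

fun Dpos :: "nat \<Rightarrow> int" where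
  "Dpos 0 = 1"
| "Dpos (Suc 0) = 0"
| "Dpos (Suc (Suc 0)) = 0"
| "Dpos (Suc (Suc (Suc n))) = Dpos n + Dpos (Suc n)"

text \<open>Dneg k = D(2 - k), obtained by running the recurrence backwards:
  D(m) = D(m+3) - D(m+1).\<close>
fun Dneg :: "nat \<Rightarrow> int" where
  "Dneg 0 = 0"
| "Dneg (Suc 0) = 0"
| "Dneg (Suc (Suc 0)) = 1"
| "Dneg (Suc (Suc (Suc k))) = Dneg k - Dneg (Suc (Suc k))"

definition D :: "int \<Rightarrow> int" where
  "D n = (if 0 \<le> n then Dpos (nat n) else Dneg (nat (2 - n)))"

definition Delta' :: "int \<Rightarrow> int \<Rightarrow> int \<Rightarrow> int" where
  "Delta' a b c = det (vector [vector [D (a+2), D (a+4), D (a+3)],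
                               vector [D (b+2), D (b+4), D (b+3)],
                               vector [D (c+2), D (c+4), D (c+3)]] :: int^3^3)"

end

theory Submission
  imports Defs
begin

(* Passing from m to m + 1 turns the row (D(m+2), D(m+4), D(m+3)) into
   (D(m+3), D(m+2) + D(m+3), D(m+4)) by the recurrence, i.e. the columns
   (c1, c2, c3) of the matrix become (c3, c1 + c3, c2): a shear followed by a
   cyclic permutation, which leaves the determinant unchanged. Hence Delta' is
   invariant under simultaneous shifts, and at n = 0 the rows D(2), D(4), D(3)
   are (0, 0, 1), so the determinant collapses to a 2x2 minor. *)

lemma D_of_nat: "D (int k) = Dpos k"
  by (simp add: D_def)

lemma D_two_minus: "D (2 - int k) = Dneg k"
proof (cases "k \<le> 2")
  case True
  then consider "k = 0" | "k = 1" | "k = 2" by linarith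
  then show ?thesis by cases (simp_all add: D_def numeral_eq_Suc)
next
  case False
  then show ?thesis by (simp add: D_def)
qed

lemma D_rec: "D (n + 3) = D n + D (n + 1)"
proof (cases "n \<ge> 0")
  case True
  then obtain k where "n = int k" by (metis nonneg_eq_int)
  then show ?thesis
    using D_of_nat[of "Suc (Suc (Suc k))"] D_of_nat[of k] D_of_nat[of "Suc k"]
    by (simp add: add.commute)
next
  case False
  define k where "k = nat (- 1 - n)"
  have k: "n = 2 - int (Suc (Suc (Suc k)))"
    using False by (simp add: k_def)
  then have "n + 1 = 2 - int (Suc (Suc k))" "n + 3 = 2 - int k"
    by simp_all
  then show ?thesis
    using k D_two_minus[of k] D_two_minus[of "Suc (Suc k)"]
      D_two_minus[of "Suc (Suc (Suc k))"]
    by simp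
qed

lemma D_2: "D 2 = 0" and D_3: "D 3 = 1" and D_4: "D 4 = 0"
  by (simp_all add: D_def numeral_eq_Suc)

lemma Delta'_expand: "Delta' a b c =
    D (a+2) * D (b+4) * D (c+3) + D (a+4) * D (b+3) * D (c+2) + D (a+3) * D (b+2) * D (c+4)
  - D (a+2) * D (b+3) * D (c+4) - D (a+4) * D (b+2) * D (c+3) - D (a+3) * D (b+4) * D (c+2)"
  unfolding Delta'_def det_3 by simp

lemma Delta'_shift_one: "Delta' (a + 1) (b + 1) (c + 1) = Delta' a b c"
proof -
  have shift: "D (x + 1 + 2) = D (x + 3)" "D (x + 1 + 3) = D (x + 4)"
    "D (x + 1 + 4) = D (x + 2) + D (x + 3)" for x
    using D_rec[of "x + 2"] by (simp_all add: add.assoc)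
  show ?thesis
    unfolding Delta'_expand shift by (simp add: algebra_simps)
qed

lemma Delta'_shift: "Delta' (a + k) (b + k) (c + k) = Delta' a b c"
proof (induction k rule: int_induct[where k = 0])
  case base
  then show ?case by simp
next
  case (step1 i)
  then show ?case
    using Delta'_shift_one[of "a + i" "b + i" "c + i"] by (simp add: add.assoc)
next
  case (step2 i)
  then show ?case
    using Delta'_shift_one[of "a + (i - 1)" "b + (i - 1)" "c + (i - 1)"]
    by (simp add: algebra_simps)
qed

lemma Delta'_from_zero: "Delta' 0 i (i + j) = D (i+2) * D (i+j+4) - D (i+j+2) * D (i+4)"
  unfolding Delta'_expand by (simp add: D_2 D_3 D_4 algebra_simps)

theorem theorem18:
  shows "(\<forall>n m i j :: int. Delta' n (n+i) (n+i+j) = Delta' m (m+i) (m+i+j))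
       \<and> (\<forall>n i j :: int. Delta' n (n+i) (n+i+j)
              = D (i+2) * D (i+j+4) - D (i+j+2) * D (i+4))"
proof -
  have "Delta' n (n+i) (n+i+j) = Delta' 0 i (i+j)" for n i j :: int
    using Delta'_shift[of 0 n i "i+j"] by (simp add: algebra_simps)
  then show ?thesis
    using Delta'_from_zero by simp
qed

end
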